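(* For every Tychonoff space $X$, the following are equivalent: (1) $C_p(X)\models S_1(\Gamma_f,\Gamma_f)$ for every $f\in C_p(X)$; (2) $X\models S_1(\Gamma_F,\Gamma)$.
   Context: All spaces are Tychonoff; $C_p(X)$ is $C(X)$ with pointwise convergence topology. For $y$ in a space $Y$: $\Gamma_y=\{A\subseteq Y: A$ infinite, $y\notin A$, every neighbourhood of $y$ contains all but finitely many points of $A\}$. Zero-set: $g^{-1}(0)$, $g\in C(X)$; cozero-set: its complement. A cover $\mathcal U$ of $X$ always means $X=\bigcup\mathcal U$, $X\notin\mathcal U$; $\gamma$-cover: infinite, each point in all but finitely many members. $\Gamma$: open $\gamma$-covers. $\Gamma_F$: $\gamma$-covers $\mathcal U$ of $X$ by cozero-sets for which there are zero-sets $F(U)\subseteq U$ ($U\in\mathcal U$) with $\{F(U):U\in\mathcal U\}$ a $\gamma$-cover of $X$. $S_1(\mathcal A,\mathcal B)$: for every sequence $(A_n)$ from $\mathcal A$ there are $b_n\in A_n$ with $\{b_n:n\in\omega\}\in\mathcal B$. *)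

theory Defs
  imports "HOL-Analysis.Analysis"
begin

definition tychonoff_space :: "'a topology \<Rightarrow> bool" where
  "tychonoff_space X \<longleftrightarrow> completely_regular_space X \<and> Hausdorff_space X"

text \<open>C_p(X): continuous real functions on X (extensional, i.e. undefined outside
  the carrier) with the topology of pointwise convergence, i.e. as a subspace of
  the product topology on real^X.\<close>
definition Cp :: "'a topology \<Rightarrow> ('a \<Rightarrow> real) topology" where
  "Cp X = subtopology (product_topology (\<lambda>_. euclideanreal) (topspace X))
            {f. continuous_map X euclideanreal f \<and> f \<in> extensional (topspace X)}"

definition Gamma_pt :: "'b topology \<Rightarrow> 'b \<Rightarrow> 'b set set" where
  "Gamma_pt Y y = {A. A \<subseteq> topspace Y \<and> infinite A \<and> y \<notin> A \<and>
      (\<forall>U. openin Y U \<and> y \<in> U \<longrightarrow> finite (A - U))}"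

definition S1 :: "'c set set \<Rightarrow> 'c set set \<Rightarrow> bool" where
  "S1 \<A> \<B> \<longleftrightarrow> (\<forall>A :: nat \<Rightarrow> 'c set. (\<forall>n. A n \<in> \<A>) \<longrightarrow>
      (\<exists>b. (\<forall>n. b n \<in> A n) \<and> range b \<in> \<B>))"

definition zero_set :: "'a topology \<Rightarrow> 'a set \<Rightarrow> bool" where
  "zero_set X Z \<longleftrightarrow> (\<exists>g. continuous_map X euclideanreal g \<and> Z = {x \<in> topspace X. g x = 0})"

definition cozero_set :: "'a topology \<Rightarrow> 'a set \<Rightarrow> bool" where
  "cozero_set X U \<longleftrightarrow> (\<exists>g. continuous_map X euclideanreal g \<and> U = {x \<in> topspace X. g x \<noteq> 0})"

definition is_cover :: "'a topology \<Rightarrow> 'a set set \<Rightarrow> bool" where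
  "is_cover X \<U> \<longleftrightarrow> \<Union>\<U> = topspace X \<and> topspace X \<notin> \<U>"

definition gamma_cover :: "'a topology \<Rightarrow> 'a set set \<Rightarrow> bool" where
  "gamma_cover X \<U> \<longleftrightarrow> is_cover X \<U> \<and> infinite \<U> \<and>
      (\<forall>x \<in> topspace X. finite {U \<in> \<U>. x \<notin> U})"

definition Gamma_open :: "'a topology \<Rightarrow> 'a set set set" where
  "Gamma_open X = {\<U>. gamma_cover X \<U> \<and> (\<forall>U \<in> \<U>. openin X U)}"

definition Gamma_F :: "'a topology \<Rightarrow> 'a set set set" where
  "Gamma_F X = {\<U>. gamma_cover X \<U> \<and> (\<forall>U \<in> \<U>. cozero_set X U) \<and>
      (\<exists>F. (\<forall>U \<in> \<U>. zero_set X (F U) \<and> F U \<subseteq> U) \<and> gamma_cover X (F ` \<U>))}"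

end

theory Submission
  imports Defs
begin

text \<open>
  (1) \<open>\<Longrightarrow>\<close> (2) needs the selection principle only at the zero function. A cozero set \<open>U\<close>
  containing a zero set \<open>F(U)\<close> is \<open>{\<phi> < 1}\<close> for a continuous \<open>\<phi> \<ge> 0\<close> vanishing exactly on \<open>F(U)\<close>.
  Because the sets \<open>F(U)\<close> of a \<open>\<Gamma>\<^sub>F\<close>-cover form a \<open>\<gamma>\<close>-cover, these functions converge
  pointwise to 0, so every \<open>\<Gamma>\<^sub>F\<close>-cover yields a member of \<open>\<Gamma>\<^sub>0\<close>; selecting from these, the
  sublevel sets \<open>{b\<^sub>n < 1}\<close> of a sequence converging to 0 form a \<open>\<gamma>\<close>-cover.

  (2) \<open>\<Longrightarrow>\<close> (1): enumerate each \<open>A\<^sub>n \<in> \<Gamma>\<^sub>f\<close> as \<open>g n k\<close> and let \<open>W m k\<close> be the cozero set where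
  \<open>|g i k - f| < 1/(i+1)\<close> for all \<open>i \<le> m\<close>. It contains the zero set given by the bounds
  \<open>1/(2(i+1))\<close>, and for fixed \<open>m\<close> each point lies in all but finitely many of these zero sets. So
  either every row \<open>W m\<close> has a member equal to \<open>X\<close>, or from some row on all rows are
  \<open>\<Gamma>\<^sub>F\<close>-covers; in both cases one obtains \<open>\<kappa>\<close> with \<open>x \<in> W i (\<kappa> i)\<close> eventually for every \<open>x\<close>,
  i.e. \<open>g i (\<kappa> i) \<rightarrow> f\<close> pointwise.
\<close>

definition Cp_zero :: "'a topology \<Rightarrow> 'a \<Rightarrow> real" where
  "Cp_zero X = restrict (\<lambda>_. 0) (topspace X)"

lemma topspace_Cp:
  "topspace (Cp X) = {f. continuous_map X euclideanreal f \<and> f \<in> extensional (topspace X)}"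
  unfolding Cp_def by (auto simp: topspace_product_topology PiE_iff extensional_def)

lemma Cp_zero_in_topspace: "Cp_zero X \<in> topspace (Cp X)"
  by (simp add: topspace_Cp Cp_zero_def)

lemma Cp_zero_apply [simp]: "x \<in> topspace X \<Longrightarrow> Cp_zero X x = 0"
  by (simp add: Cp_zero_def)

lemma continuous_map_Cp_eval:
  assumes "x \<in> topspace X"
  shows "continuous_map (Cp X) euclideanreal (\<lambda>h. h x)"
  unfolding Cp_def
  by (rule continuous_map_from_subtopology)
     (use continuous_map_product_projection[OF assms, of "\<lambda>_. euclideanreal"] in simp)

lemma openin_Cp_eval_preimage:
  assumes "x \<in> topspace X" "open T"
  shows "openin (Cp X) {h \<in> topspace (Cp X). h x \<in> T}"
  using openin_continuous_map_preimage[OF continuous_map_Cp_eval[OF assms(1)]] assms(2) by simp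

lemma limitin_Cp_pointwise:
  assumes "f \<in> topspace (Cp X)" "eventually (\<lambda>a. s a \<in> topspace (Cp X)) F"
    "\<And>x. x \<in> topspace X \<Longrightarrow> ((\<lambda>a. s a x) \<longlongrightarrow> f x) F"
  shows "limitin (Cp X) s f F"
proof -
  have "limitin (product_topology (\<lambda>_. euclideanreal) (topspace X)) s f F"
    unfolding limitin_componentwise
    using assms by (auto simp: topspace_Cp Cp_def elim!: eventually_mono)
  then show ?thesis
    unfolding Cp_def limitin_subtopology using assms(1,2) by (simp add: topspace_Cp)
qed

lemma Hausdorff_space_Cp: "Hausdorff_space (Cp X)"
  unfolding Cp_def
  by (rule Hausdorff_space_subtopology) (simp add: Hausdorff_space_product_topology)

lemma Gamma_pt_Cp_iff:
  assumes "f \<in> topspace (Cp X)"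
  shows "A \<in> Gamma_pt (Cp X) f \<longleftrightarrow> A \<subseteq> topspace (Cp X) \<and> infinite A \<and> f \<notin> A \<and>
           (\<forall>x \<in> topspace X. \<forall>\<epsilon>>0. finite {h \<in> A. \<epsilon> \<le> \<bar>h x - f x\<bar>})"
    (is "?lhs \<longleftrightarrow> ?base \<and> ?small")
proof
  assume A: ?lhs
  have "finite {h \<in> A. \<epsilon> \<le> \<bar>h x - f x\<bar>}" if x: "x \<in> topspace X" and "\<epsilon> > 0" for x \<epsilon>
  proof -
    let ?N = "{h \<in> topspace (Cp X). h x \<in> ball (f x) \<epsilon>}"
    have "finite (A - ?N)"
      using A openin_Cp_eval_preimage[OF x, of "ball (f x) \<epsilon>"] assms \<open>\<epsilon> > 0\<close>
      by (auto simp: Gamma_pt_def)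
    then show ?thesis
      by (rule finite_subset[rotated]) (auto simp: dist_real_def)
  qed
  with A show "?base \<and> ?small" by (auto simp: Gamma_pt_def)
next
  assume A: "?base \<and> ?small"
  let ?F = "inf cofinite (principal A)"
  have lim: "limitin (Cp X) id f ?F"
  proof (rule limitin_Cp_pointwise[OF assms])
    show "\<forall>\<^sub>F a in ?F. id a \<in> topspace (Cp X)"
      using A by (auto simp: eventually_inf_principal intro!: always_eventually)
    show "((\<lambda>a. id a x) \<longlongrightarrow> f x) ?F" if x: "x \<in> topspace X" for x
    proof (rule tendstoI)
      fix \<epsilon> :: real assume "\<epsilon> > 0"
      with A x have "finite {h \<in> A. \<epsilon> \<le> \<bar>h x - f x\<bar>}" by blast
      then show "\<forall>\<^sub>F a in ?F. dist (id a x) (f x) < \<epsilon>"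
        unfolding eventually_inf_principal eventually_cofinite
        by (rule finite_subset[rotated]) (auto simp: dist_real_def)
    qed
  qed
  have "finite (A - U)" if "openin (Cp X) U" "f \<in> U" for U
  proof -
    have "\<forall>\<^sub>F a in ?F. id a \<in> U" using lim that by (simp add: limitin_def)
    then show ?thesis
      unfolding eventually_inf_principal eventually_cofinite
      by (rule finite_subset[rotated]) auto
  qed
  with A show ?lhs by (auto simp: Gamma_pt_def)
qed

text \<open>A finite range would be closed in the Hausdorff space \<open>Cp X\<close>, so its complement would be a
  neighbourhood of the limit \<open>f\<close> avoiding every \<open>b i\<close>.\<close>
lemma range_in_Gamma_pt_CpI:
  assumes f: "f \<in> topspace (Cp X)" and b: "\<And>i. b i \<in> topspace (Cp X)" "\<And>i. b i \<noteq> f"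
    and conv: "\<And>x. x \<in> topspace X \<Longrightarrow> ((\<lambda>i. b i x) \<longlongrightarrow> f x) sequentially"
  shows "range b \<in> Gamma_pt (Cp X) f"
proof -
  have lim: "limitin (Cp X) b f sequentially"
    using limitin_Cp_pointwise[OF f, of b sequentially] b(1) conv by simp
  have "finite (range b - U)" if "openin (Cp X) U" "f \<in> U" for U
  proof -
    have "\<forall>\<^sub>F i in sequentially. b i \<in> U" using lim that by (simp add: limitin_def)
    then obtain N where N: "\<And>i. i \<ge> N \<Longrightarrow> b i \<in> U" by (auto simp: eventually_sequentially)
    have "b i \<in> b ` {..<N}" if "b i \<notin> U" for i
      using N[of i] that by (cases "N \<le> i") auto
    then have "range b - U \<subseteq> b ` {..<N}" by blast
    then show ?thesis by (rule finite_subset) auto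
  qed
  moreover have "infinite (range b)"
  proof
    assume "finite (range b)"
    then have "closedin (Cp X) (range b)"
      using Hausdorff_space_Cp Hausdorff_imp_t1_space t1_space_closedin_finite b(1) by blast
    then have "openin (Cp X) (topspace (Cp X) - range b)" by auto
    with lim f b(2) have "\<forall>\<^sub>F i in sequentially. b i \<in> topspace (Cp X) - range b"
      unfolding limitin_def by blast
    then show False by (simp add: eventually_sequentially)
  qed
  moreover have "range b \<subseteq> topspace (Cp X)" "f \<notin> range b" using b by auto
  ultimately show ?thesis unfolding Gamma_pt_def by blast
qed

lemma cozero_set_subset: "cozero_set X U \<Longrightarrow> U \<subseteq> topspace X"
  unfolding cozero_set_def by auto

lemma zero_set_subset: "zero_set X Z \<Longrightarrow> Z \<subseteq> topspace X"
  unfolding zero_set_def by auto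

lemma openin_cozero_set: "cozero_set X U \<Longrightarrow> openin X U"
  unfolding cozero_set_def
  using openin_continuous_map_preimage[of X euclideanreal _ "-{0}"] by (auto simp: open_Compl)

lemma cozero_set_Int:
  assumes "cozero_set X U" "cozero_set X V"
  shows "cozero_set X (U \<inter> V)"
proof -
  obtain g h where "continuous_map X euclideanreal g" "U = {x \<in> topspace X. g x \<noteq> 0}"
    and "continuous_map X euclideanreal h" "V = {x \<in> topspace X. h x \<noteq> 0}"
    using assms by (auto simp: cozero_set_def)
  then show ?thesis unfolding cozero_set_def
    by (intro exI[of _ "\<lambda>x. g x * h x"] conjI continuous_map_real_mult) auto
qed

lemma zero_set_Int:
  assumes "zero_set X Z" "zero_set X Z'"
  shows "zero_set X (Z \<inter> Z')"
proof -
  obtain g h where "continuous_map X euclideanreal g" "Z = {x \<in> topspace X. g x = 0}"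
    and "continuous_map X euclideanreal h" "Z' = {x \<in> topspace X. h x = 0}"
    using assms by (auto simp: zero_set_def)
  then show ?thesis unfolding zero_set_def
    by (intro exI[of _ "\<lambda>x. \<bar>g x\<bar> + \<bar>h x\<bar>"] conjI continuous_intros) auto
qed

lemma cozero_set_less:
  assumes "continuous_map X euclideanreal u"
  shows "cozero_set X {x \<in> topspace X. u x < c}"
  unfolding cozero_set_def
proof (intro exI conjI)
  show "continuous_map X euclideanreal (\<lambda>x. (c - u x) + \<bar>c - u x\<bar>)"
    using assms by (intro continuous_intros) auto
qed (auto simp: abs_if)

lemma zero_set_le:
  assumes "continuous_map X euclideanreal u"
  shows "zero_set X {x \<in> topspace X. u x \<le> c}"
  unfolding zero_set_def
proof (intro exI conjI)
  show "continuous_map X euclideanreal (\<lambda>x. (u x - c) + \<bar>u x - c\<bar>)"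
    using assms by (intro continuous_intros) auto
qed (auto simp: abs_if)

lemma cozero_set_all_less:
  fixes u :: "nat \<Rightarrow> 'a \<Rightarrow> real"
  assumes "\<And>i. continuous_map X euclideanreal (u i)"
  shows "cozero_set X {x \<in> topspace X. \<forall>i\<le>m. u i x < c i}"
proof (induction m)
  case 0
  then show ?case using cozero_set_less[OF assms] by simp
next
  case (Suc m)
  have "{x \<in> topspace X. \<forall>i\<le>Suc m. u i x < c i} =
        {x \<in> topspace X. \<forall>i\<le>m. u i x < c i} \<inter> {x \<in> topspace X. u (Suc m) x < c (Suc m)}"
    by (auto simp: le_Suc_eq)
  then show ?case using cozero_set_Int[OF Suc cozero_set_less[OF assms]] by simp
qed

lemma zero_set_all_le:
  fixes u :: "nat \<Rightarrow> 'a \<Rightarrow> real"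
  assumes "\<And>i. continuous_map X euclideanreal (u i)"
  shows "zero_set X {x \<in> topspace X. \<forall>i\<le>m. u i x \<le> c i}"
proof (induction m)
  case 0
  then show ?case using zero_set_le[OF assms] by simp
next
  case (Suc m)
  have "{x \<in> topspace X. \<forall>i\<le>Suc m. u i x \<le> c i} =
        {x \<in> topspace X. \<forall>i\<le>m. u i x \<le> c i} \<inter> {x \<in> topspace X. u (Suc m) x \<le> c (Suc m)}"
    by (auto simp: le_Suc_eq)
  then show ?case using zero_set_Int[OF Suc zero_set_le[OF assms]] by simp
qed

text \<open>With \<open>Z = g\<^sup>-\<^sup>1(0)\<close> and \<open>U = X - h\<^sup>-\<^sup>1(0)\<close> take \<open>\<phi> = |g| / (|g| + |h|)\<close>; the denominator
  vanishes nowhere because \<open>Z \<subseteq> U\<close>.\<close>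
lemma zero_set_cozero_set_level_function:
  assumes "zero_set X Z" "cozero_set X U" "Z \<subseteq> U"
  obtains \<phi> where "\<phi> \<in> topspace (Cp X)" "\<And>x. x \<in> topspace X \<Longrightarrow> \<phi> x = 0 \<longleftrightarrow> x \<in> Z"
    "\<And>x. x \<in> topspace X \<Longrightarrow> \<phi> x < 1 \<longleftrightarrow> x \<in> U"
proof -
  obtain g where g: "continuous_map X euclideanreal g" "Z = {x \<in> topspace X. g x = 0}"
    using assms(1) by (auto simp: zero_set_def)
  obtain h where h: "continuous_map X euclideanreal h" "U = {x \<in> topspace X. h x \<noteq> 0}"
    using assms(2) by (auto simp: cozero_set_def)
  have pos: "0 < \<bar>g x\<bar> + \<bar>h x\<bar>" if "x \<in> topspace X" for x
    using assms(3) g(2) h(2) that by (cases "g x = 0") auto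
  define \<phi> where "\<phi> = restrict (\<lambda>x. \<bar>g x\<bar> / (\<bar>g x\<bar> + \<bar>h x\<bar>)) (topspace X)"
  have "continuous_map X euclideanreal (\<lambda>x. \<bar>g x\<bar> / (\<bar>g x\<bar> + \<bar>h x\<bar>))"
    using pos by (intro continuous_intros g(1) h(1)) (metis order_less_irrefl)
  then have "\<phi> \<in> topspace (Cp X)"
    unfolding \<phi>_def topspace_Cp by (auto intro: continuous_map_eq)
  moreover have "\<phi> x < 1 \<longleftrightarrow> x \<in> U" if "x \<in> topspace X" for x
    using pos[OF that] that by (simp add: \<phi>_def h(2) divide_less_eq_1)
  moreover have "\<phi> x = 0 \<longleftrightarrow> x \<in> Z" if "x \<in> topspace X" for x
    using pos[OF that] that by (simp add: \<phi>_def g(2))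
  ultimately show ?thesis
    using that[of \<phi>] by (simp add: \<phi>_def)
qed

lemma obtain_inj_on_image_eq:
  obtains B where "B \<subseteq> A" "inj_on f B" "f ` B = f ` A"
proof
  show "inv_into A f ` f ` A \<subseteq> A" by (auto intro: inv_into_into)
  show "inj_on f (inv_into A f ` f ` A)" by (auto simp: inj_on_def f_inv_into_f)
  show "f ` inv_into A f ` f ` A = f ` A" by (rule image_inv_into_cancel) auto
qed

lemma gamma_cover_image:
  assumes sub: "\<And>k. k \<in> L \<Longrightarrow> T k \<subseteq> topspace X"
    and proper: "\<And>k. k \<in> L \<Longrightarrow> T k \<noteq> topspace X"
    and L: "infinite L"
    and misses: "\<And>x. x \<in> topspace X \<Longrightarrow> finite {k \<in> L. x \<notin> T k}"
  shows "gamma_cover X (T ` L)"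
proof -
  have fin: "finite {V \<in> T ` L. x \<notin> V}" if "x \<in> topspace X" for x
    using finite_imageI[OF misses[OF that], of T] by (rule finite_subset[rotated]) auto
  have "infinite (T ` L)"
  proof
    assume "finite (T ` L)"
    then obtain V where V: "V \<in> T ` L" "infinite (T -` {V} \<inter> L)"
      using inf_img_fin_dom'[OF _ L] by blast
    then obtain x where x: "x \<in> topspace X" "x \<notin> V"
      using sub proper by blast
    have "T -` {V} \<inter> L \<subseteq> {k \<in> L. x \<notin> T k}" using x by auto
    then show False using V(2) misses[OF x(1)] finite_subset by blast
  qed
  moreover have "topspace X \<subseteq> \<Union>(T ` L)"
  proof
    fix x assume x: "x \<in> topspace X"
    have "L - {k \<in> L. x \<notin> T k} \<noteq> {}"
      using L misses[OF x] by (metis Diff_eq_empty_iff finite_subset)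
    then show "x \<in> \<Union>(T ` L)" by blast
  qed
  ultimately show ?thesis
    using sub proper fin unfolding gamma_cover_def is_cover_def by blast
qed

text \<open>Passing to a subsequence that lists the members of the \<open>\<gamma>\<close>-cover without repetition.\<close>
lemma gamma_cover_range_subseq:
  assumes "gamma_cover X (range C)"
  obtains s :: "nat \<Rightarrow> nat" where "strict_mono s"
    "\<And>x. x \<in> topspace X \<Longrightarrow> eventually (\<lambda>i. x \<in> C (s i)) sequentially"
proof -
  obtain L where L: "inj_on C L" "C ` L = range C"
    using obtain_inj_on_image_eq[of UNIV C] by metis
  have "infinite L"
    using assms L(2) by (metis finite_imageI gamma_cover_def)
  then have s: "strict_mono (enumerate L)" "range (enumerate L) = L"
    by (simp_all add: strict_mono_enumerate range_enumerate)
  have "eventually (\<lambda>i. x \<in> C (enumerate L i)) sequentially" if x: "x \<in> topspace X" for x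
  proof -
    have "finite (C -` {V \<in> range C. x \<notin> V} \<inter> L)"
      using assms x L(1) by (intro finite_vimage_IntI) (auto simp: gamma_cover_def)
    then have "finite (enumerate L -` (C -` {V \<in> range C. x \<notin> V} \<inter> L))"
      using strict_mono_imp_inj_on[OF s(1)] by (rule finite_vimageI)
    then have "finite {i. x \<notin> C (enumerate L i)}"
      by (rule finite_subset[rotated]) (use s(2) in auto)
    then show ?thesis
      by (simp add: eventually_cofinite cofinite_eq_sequentially[symmetric])
  qed
  with s(1) show ?thesis using that by blast
qed

lemma range_in_Gamma_F:
  assumes coz: "\<And>k. cozero_set X (W k)" and zer: "\<And>k. zero_set X (Z k)"
    and ZW: "\<And>k. Z k \<subseteq> W k" and proper: "\<And>k. W k \<noteq> topspace X"
    and fin: "\<And>x. x \<in> topspace X \<Longrightarrow> finite {k::nat. x \<notin> Z k}"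
  shows "range W \<in> Gamma_F X"
proof -
  have WX: "W k \<subseteq> topspace X" for k using coz cozero_set_subset by blast
  have ZX: "Z k \<noteq> topspace X" for k using ZW[of k] WX[of k] proper[of k] by blast
  have gW: "gamma_cover X (range W)"
  proof (rule gamma_cover_image)
    show "finite {k \<in> UNIV. x \<notin> W k}" if "x \<in> topspace X" for x
      using fin[OF that] by (rule finite_subset[rotated]) (use ZW in auto)
  qed (use WX proper in auto)
  obtain L where L: "inj_on W L" "W ` L = range W"
    using obtain_inj_on_image_eq[of UNIV W] by metis
  have "infinite L"
    using gW L(2) by (metis finite_imageI gamma_cover_def)
  then have "gamma_cover X (Z ` L)"
    by (intro gamma_cover_image) (use zer zero_set_subset ZX fin in auto)
  moreover have "(\<lambda>V. Z (the_inv_into L W V)) ` range W = Z ` L"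
    unfolding L(2)[symmetric] image_image using L(1) by (simp add: the_inv_into_f_f cong: image_cong)
  moreover have "Z (the_inv_into L W V) \<subseteq> V" if "V \<in> range W" for V
    using f_the_inv_into_f[OF L(1), of V] ZW L(2) that by metis
  ultimately show ?thesis
    unfolding Gamma_F_def using gW coz zer by (intro CollectI conjI exI[of _ "\<lambda>V. Z (the_inv_into L W V)"]) auto
qed

lemma Gamma_F_obtain_seq:
  assumes "\<U> \<in> Gamma_F X"
  obtains u z :: "nat \<Rightarrow> 'a set" where "\<And>k. u k \<in> \<U>" "\<And>k. zero_set X (z k)" "\<And>k. z k \<subseteq> u k"
    "inj z" "\<And>x. x \<in> topspace X \<Longrightarrow> finite {k. x \<notin> z k}"
proof -
  obtain F where zer: "\<And>U. U \<in> \<U> \<Longrightarrow> zero_set X (F U)" and FU: "\<And>U. U \<in> \<U> \<Longrightarrow> F U \<subseteq> U"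
    and gF: "gamma_cover X (F ` \<U>)"
    using assms by (auto simp: Gamma_F_def)
  have "infinite (F ` \<U>)" using gF by (simp add: gamma_cover_def)
  then obtain z :: "nat \<Rightarrow> 'a set" where z: "inj z" "range z \<subseteq> F ` \<U>"
    using infinite_countable_subset by blast
  then have "\<forall>k. \<exists>U \<in> \<U>. z k = F U" by blast
  then obtain u where u: "\<And>k. u k \<in> \<U>" "\<And>k. z k = F (u k)"
    by metis
  have "finite {k. x \<notin> z k}" if "x \<in> topspace X" for x
  proof -
    have "finite (z -` {T \<in> F ` \<U>. x \<notin> T})"
      using gF that z(1) by (intro finite_vimageI) (auto simp: gamma_cover_def)
    then show ?thesis by (rule finite_subset[rotated]) (use z(2) in auto)
  qed
  with u z(1) show ?thesis
    using that[of u z] zer FU by simp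
qed

lemma Gamma_F_level_functions:
  assumes \<U>: "\<U> \<in> Gamma_F X"
  obtains \<phi> :: "nat \<Rightarrow> 'a \<Rightarrow> real"
  where "\<And>k. {x \<in> topspace X. \<phi> k x < 1} \<in> \<U>" "range \<phi> \<in> Gamma_pt (Cp X) (Cp_zero X)"
proof -
  obtain u z :: "nat \<Rightarrow> 'a set" where u: "\<And>k. u k \<in> \<U>" and zer: "\<And>k. zero_set X (z k)"
    and zu: "\<And>k. z k \<subseteq> u k" and z: "inj z" and fin: "\<And>x. x \<in> topspace X \<Longrightarrow> finite {k. x \<notin> z k}"
    using Gamma_F_obtain_seq[OF \<U>] by blast
  have coz: "cozero_set X (u k)" and proper: "u k \<noteq> topspace X" for k
    using \<U> u[of k] by (auto simp: Gamma_F_def gamma_cover_def is_cover_def)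
  have "\<forall>k. \<exists>\<phi>. \<phi> \<in> topspace (Cp X) \<and>
          (\<forall>x \<in> topspace X. (\<phi> x = 0 \<longleftrightarrow> x \<in> z k) \<and> (\<phi> x < 1 \<longleftrightarrow> x \<in> u k))"
  proof
    fix k
    obtain \<phi> where "\<phi> \<in> topspace (Cp X)" "\<And>x. x \<in> topspace X \<Longrightarrow> \<phi> x = 0 \<longleftrightarrow> x \<in> z k"
      "\<And>x. x \<in> topspace X \<Longrightarrow> \<phi> x < 1 \<longleftrightarrow> x \<in> u k"
      by (rule zero_set_cozero_set_level_function[OF zer coz zu]) blast
    then show "\<exists>\<phi>. \<phi> \<in> topspace (Cp X) \<and>
          (\<forall>x \<in> topspace X. (\<phi> x = 0 \<longleftrightarrow> x \<in> z k) \<and> (\<phi> x < 1 \<longleftrightarrow> x \<in> u k))"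
      by blast
  qed
  from choice[OF this] obtain \<phi> where
    \<phi>: "\<And>k. \<phi> k \<in> topspace (Cp X)"
    and \<phi>_zero: "\<And>k x. x \<in> topspace X \<Longrightarrow> \<phi> k x = 0 \<longleftrightarrow> x \<in> z k"
    and \<phi>_less: "\<And>k x. x \<in> topspace X \<Longrightarrow> \<phi> k x < 1 \<longleftrightarrow> x \<in> u k"
    by blast
  have "z k = {x \<in> topspace X. \<phi> k x = 0}" for k
    using zer zero_set_subset \<phi>_zero by blast
  then have "inj \<phi>"
    using z by (metis injD injI)
  then have "infinite (range \<phi>)" by (simp add: finite_image_iff)
  moreover have "Cp_zero X \<notin> range \<phi>"
  proof
    assume "Cp_zero X \<in> range \<phi>"
    then obtain k where "\<phi> k = Cp_zero X" by auto
    then have "topspace X \<subseteq> u k" using \<phi>_less[of _ k] by force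
    then show False using cozero_set_subset[OF coz] proper by blast
  qed
  moreover have "finite {h \<in> range \<phi>. \<epsilon> \<le> \<bar>h x - Cp_zero X x\<bar>}"
    if x: "x \<in> topspace X" and "\<epsilon> > 0" for x \<epsilon>
  proof -
    have "finite (\<phi> ` {k. x \<notin> z k})" using fin[OF x] by (rule finite_imageI)
    then show ?thesis
      by (rule finite_subset[rotated]) (use x \<open>\<epsilon> > 0\<close> \<phi>_zero in force)
  qed
  ultimately have "range \<phi> \<in> Gamma_pt (Cp X) (Cp_zero X)"
    using \<phi> by (auto simp: Gamma_pt_Cp_iff[OF Cp_zero_in_topspace])
  moreover have "{x \<in> topspace X. \<phi> k x < 1} = u k" for k
    using \<phi>_less cozero_set_subset[OF coz] by blast
  ultimately show ?thesis using that[of \<phi>] u by simp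
qed

lemma gamma_cover_sublevel_sets:
  assumes b: "range b \<in> Gamma_pt (Cp X) (Cp_zero X)"
    and proper: "\<And>n. {x \<in> topspace X. b n x < 1} \<noteq> topspace X"
  shows "gamma_cover X (range (\<lambda>n. {x \<in> topspace X. b n x < 1}))"
proof -
  let ?T = "\<lambda>n. {x \<in> topspace X. b n x < 1}"
  obtain L where L: "inj_on b L" "b ` L = range b"
    using obtain_inj_on_image_eq[of UNIV b] by metis
  have "range ?T = (\<lambda>h. {x \<in> topspace X. h x < 1}) ` range b"
    by (simp add: image_image)
  also have "\<dots> = ?T ` L"
    unfolding L(2)[symmetric] by (simp add: image_image)
  finally have T: "range ?T = ?T ` L" .
  have "infinite (range b)" using b by (simp add: Gamma_pt_def)
  then have "infinite L" using L(2) finite_imageI by metis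
  then have "gamma_cover X (?T ` L)"
  proof (intro gamma_cover_image)
    fix x assume x: "x \<in> topspace X"
    have "finite {h \<in> range b. 1 \<le> \<bar>h x - Cp_zero X x\<bar>}"
      using b x by (simp add: Gamma_pt_Cp_iff[OF Cp_zero_in_topspace])
    then have "finite (b -` {h \<in> range b. 1 \<le> \<bar>h x - Cp_zero X x\<bar>} \<inter> L)"
      using L(1) by (rule finite_vimage_IntI)
    then show "finite {k \<in> L. x \<notin> ?T k}"
      by (rule finite_subset[rotated]) (use x in auto)
  qed (use proper in auto)
  with T show ?thesis by simp
qed

lemma S1_Gamma_pt_Cp_zero_imp_S1_Gamma_F:
  assumes "S1 (Gamma_pt (Cp X) (Cp_zero X)) (Gamma_pt (Cp X) (Cp_zero X))"
  shows "S1 (Gamma_F X) (Gamma_open X)"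
  unfolding S1_def
proof (intro allI impI)
  fix \<U> :: "nat \<Rightarrow> 'a set set" assume \<U>: "\<forall>n. \<U> n \<in> Gamma_F X"
  have "\<forall>n. \<exists>\<phi> :: nat \<Rightarrow> 'a \<Rightarrow> real. (\<forall>k. {x \<in> topspace X. \<phi> k x < 1} \<in> \<U> n) \<and>
          range \<phi> \<in> Gamma_pt (Cp X) (Cp_zero X)"
    using Gamma_F_level_functions \<U> by metis
  from choice[OF this] obtain \<phi> :: "nat \<Rightarrow> nat \<Rightarrow> 'a \<Rightarrow> real" where \<phi>: "\<forall>n. (\<forall>k. {x \<in> topspace X. \<phi> n k x < 1} \<in> \<U> n) \<and>
      range (\<phi> n) \<in> Gamma_pt (Cp X) (Cp_zero X)" ..
  then obtain b where b: "\<And>n. b n \<in> range (\<phi> n)"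
    and rb: "range b \<in> Gamma_pt (Cp X) (Cp_zero X)"
    using assms[unfolded S1_def, rule_format, of "\<lambda>n. range (\<phi> n)"] by blast
  define V where "V n = {x \<in> topspace X. b n x < 1}" for n
  have V\<U>: "V n \<in> \<U> n" for n
    using b[of n] \<phi> unfolding V_def by force
  have coz: "cozero_set X (V n)" for n
    using \<U> V\<U>[of n] by (simp add: Gamma_F_def)
  have "V n \<noteq> topspace X" for n
    using \<U> V\<U>[of n] by (auto simp: Gamma_F_def gamma_cover_def is_cover_def)
  then have "gamma_cover X (range V)"
    unfolding V_def by (rule gamma_cover_sublevel_sets[OF rb])
  then show "\<exists>c. (\<forall>n. c n \<in> \<U> n) \<and> range c \<in> Gamma_open X"
    using V\<U> coz openin_cozero_set unfolding Gamma_open_def by blast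
qed

lemma LIMSEQ_if_eventually_dist_less_inverse:
  fixes s :: "nat \<Rightarrow> 'a::metric_space"
  assumes "eventually (\<lambda>i. dist (s i) l < 1 / (real i + 1)) sequentially"
  shows "s \<longlonglongrightarrow> l"
proof (rule tendstoI)
  fix e :: real assume "e > 0"
  then have "eventually (\<lambda>i. inverse (real (Suc i)) < e) sequentially"
    using order_tendstoD(2)[OF LIMSEQ_inverse_real_of_nat] by blast
  then show "eventually (\<lambda>i. dist (s i) l < e) sequentially"
    using assms by eventually_elim (simp add: inverse_eq_divide add.commute)
qed

lemma Gamma_pt_Cp_obtain_seq:
  assumes A: "A \<in> Gamma_pt (Cp X) f" and f: "f \<in> topspace (Cp X)"
  obtains g :: "nat \<Rightarrow> 'a \<Rightarrow> real" where "range g \<subseteq> A"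
    "\<And>x \<epsilon>. x \<in> topspace X \<Longrightarrow> \<epsilon> > 0 \<Longrightarrow> finite {k. \<epsilon> \<le> \<bar>g k x - f x\<bar>}"
proof -
  have "infinite A" using A by (simp add: Gamma_pt_def)
  then obtain g :: "nat \<Rightarrow> 'a \<Rightarrow> real" where g: "inj g" "range g \<subseteq> A"
    using infinite_countable_subset by blast
  have "finite {k. \<epsilon> \<le> \<bar>g k x - f x\<bar>}" if "x \<in> topspace X" "\<epsilon> > 0" for x \<epsilon>
  proof -
    have "finite {h \<in> A. \<epsilon> \<le> \<bar>h x - f x\<bar>}"
      using A that by (simp add: Gamma_pt_Cp_iff[OF f])
    then have "finite (g -` {h \<in> A. \<epsilon> \<le> \<bar>h x - f x\<bar>})"
      using g(1) by (rule finite_vimageI)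
    then show ?thesis by (rule finite_subset[rotated]) (use g(2) in auto)
  qed
  with g(2) show ?thesis using that by blast
qed

text \<open>Unless every row \<open>W m\<close> has \<open>X\<close> itself as a member, the rows from some index on are
  \<open>\<Gamma>\<^sub>F\<close>-covers; a selected \<open>\<gamma>\<close>-cover, reindexed along a subsequence, is the required diagonal.\<close>
lemma S1_Gamma_F_Gamma_diagonal:
  fixes W Z :: "nat \<Rightarrow> nat \<Rightarrow> 'a set"
  assumes H: "S1 (Gamma_F X) (Gamma_open X)"
    and coz: "\<And>m k. cozero_set X (W m k)" and zer: "\<And>m k. zero_set X (Z m k)"
    and ZW: "\<And>m k. Z m k \<subseteq> W m k"
    and fin: "\<And>m x. x \<in> topspace X \<Longrightarrow> finite {k. x \<notin> Z m k}"
    and anti: "\<And>m m' k. m \<le> m' \<Longrightarrow> W m' k \<subseteq> W m k"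
  shows "\<exists>\<kappa> :: nat \<Rightarrow> nat. \<forall>x \<in> topspace X. eventually (\<lambda>i. x \<in> W i (\<kappa> i)) sequentially"
proof (cases "\<forall>m. \<exists>k. W m k = topspace X")
  case True
  then obtain \<kappa> where "\<And>m. W m (\<kappa> m) = topspace X" by metis
  then show ?thesis by (intro exI[of _ \<kappa>]) simp
next
  case False
  then obtain n0 where n0: "\<And>k. W n0 k \<noteq> topspace X" by blast
  have proper: "W (n + n0) k \<noteq> topspace X" for n k
    using anti[of n0 "n + n0" k] n0[of k] cozero_set_subset[OF coz[of n0 k]] by auto
  have "range (W (n + n0)) \<in> Gamma_F X" for n
    by (rule range_in_Gamma_F[OF coz zer ZW proper fin])
  then obtain C where C: "\<And>n. C n \<in> range (W (n + n0))" and "range C \<in> Gamma_open X"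
    using H[unfolded S1_def, rule_format, of "\<lambda>n. range (W (n + n0))"] by blast
  then have "gamma_cover X (range C)" by (simp add: Gamma_open_def)
  then obtain s :: "nat \<Rightarrow> nat" where s: "strict_mono s"
    and ev: "\<And>x. x \<in> topspace X \<Longrightarrow> eventually (\<lambda>i. x \<in> C (s i)) sequentially"
    by (rule gamma_cover_range_subseq) blast
  have "\<forall>n. \<exists>k. C n = W (n + n0) k" using C by blast
  then obtain kk where kk: "\<And>n. C n = W (n + n0) (kk n)" by metis
  have sub: "C (s i) \<subseteq> W i (kk (s i))" for i
    unfolding kk using anti seq_suble[OF s, of i] by simp
  have "eventually (\<lambda>i. x \<in> W i (kk (s i))) sequentially" if "x \<in> topspace X" for x
    using ev[OF that] by (rule eventually_mono) (use sub in blast)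
  then show ?thesis by (intro exI[of _ "kk \<circ> s"]) simp
qed

lemma S1_Gamma_F_pointwise_diagonal:
  fixes g :: "nat \<Rightarrow> nat \<Rightarrow> 'a \<Rightarrow> real"
  assumes H: "S1 (Gamma_F X) (Gamma_open X)"
    and g_cont: "\<And>i k. continuous_map X euclideanreal (g i k)"
    and f_cont: "continuous_map X euclideanreal f"
    and g_fin: "\<And>i x \<epsilon>. x \<in> topspace X \<Longrightarrow> \<epsilon> > 0 \<Longrightarrow> finite {k. \<epsilon> \<le> \<bar>g i k x - f x\<bar>}"
  shows "\<exists>\<kappa>. \<forall>x \<in> topspace X. (\<lambda>i. g i (\<kappa> i) x) \<longlonglongrightarrow> f x"
proof -
  define d where "d i k x = \<bar>g i k x - f x\<bar>" for i k x
  have d_cont: "continuous_map X euclideanreal (d i k)" for i k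
    unfolding d_def by (intro continuous_intros g_cont f_cont)
  define W where "W m k = {x \<in> topspace X. \<forall>i\<le>m. d i k x < 1 / (real i + 1)}" for m k
  define Z where "Z m k = {x \<in> topspace X. \<forall>i\<le>m. d i k x \<le> 1 / (2 * (real i + 1))}" for m k
  have coz: "cozero_set X (W m k)" for m k
    unfolding W_def by (rule cozero_set_all_less) (rule d_cont)
  have zer: "zero_set X (Z m k)" for m k
    unfolding Z_def by (rule zero_set_all_le) (rule d_cont)
  have ZW: "Z m k \<subseteq> W m k" for m k
  proof -
    have "1 / (2 * (real i + 1)) < 1 / (real i + 1)" for i
      by (simp add: divide_strict_left_mono)
    then show ?thesis unfolding Z_def W_def by (auto intro: order.strict_trans1)
  qed
  have fin: "finite {k. x \<notin> Z m k}" if x: "x \<in> topspace X" for m x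
  proof -
    have "finite (\<Union>i\<le>m. {k. 1 / (2 * (real i + 1)) \<le> d i k x})"
      unfolding d_def by (intro finite_UN_I finite_atMost g_fin[OF x]) simp
    then show ?thesis
      by (rule finite_subset[rotated]) (use x in \<open>auto simp: Z_def not_le intro: less_imp_le\<close>)
  qed
  have anti: "W m' k \<subseteq> W m k" if "m \<le> m'" for m m' k
    using that unfolding W_def by auto
  obtain \<kappa> where \<kappa>: "\<forall>x \<in> topspace X. eventually (\<lambda>i. x \<in> W i (\<kappa> i)) sequentially"
    using S1_Gamma_F_Gamma_diagonal[where W = W and Z = Z, OF H coz zer ZW fin anti] by blast
  have "(\<lambda>i. g i (\<kappa> i) x) \<longlonglongrightarrow> f x" if "x \<in> topspace X" for x
    using \<kappa> that
    by (intro LIMSEQ_if_eventually_dist_less_inverse)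
       (auto elim!: eventually_mono simp: W_def d_def dist_real_def)
  then show ?thesis by blast
qed

lemma S1_Gamma_F_imp_S1_Gamma_pt_Cp:
  assumes H: "S1 (Gamma_F X) (Gamma_open X)" and f: "f \<in> topspace (Cp X)"
  shows "S1 (Gamma_pt (Cp X) f) (Gamma_pt (Cp X) f)"
  unfolding S1_def
proof (intro allI impI)
  fix A :: "nat \<Rightarrow> ('a \<Rightarrow> real) set" assume A: "\<forall>n. A n \<in> Gamma_pt (Cp X) f"
  have "\<forall>i. \<exists>g :: nat \<Rightarrow> 'a \<Rightarrow> real. range g \<subseteq> A i \<and>
          (\<forall>x \<in> topspace X. \<forall>\<epsilon>>0. finite {k. \<epsilon> \<le> \<bar>g k x - f x\<bar>})"
    using Gamma_pt_Cp_obtain_seq[OF _ f] A by metis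
  from choice[OF this] obtain g :: "nat \<Rightarrow> nat \<Rightarrow> 'a \<Rightarrow> real" where
    g: "\<forall>i. range (g i) \<subseteq> A i \<and> (\<forall>x \<in> topspace X. \<forall>\<epsilon>>0. finite {k. \<epsilon> \<le> \<bar>g i k x - f x\<bar>})" ..
  have gA: "g i k \<in> A i" for i k using g by blast
  have "A i \<subseteq> topspace (Cp X)" and "f \<notin> A i" for i using A by (simp_all add: Gamma_pt_def)
  then have gCp: "g i k \<in> topspace (Cp X)" and g_ne: "g i k \<noteq> f" for i k using gA by blast+
  have "continuous_map X euclideanreal (g i k)" "continuous_map X euclideanreal f" for i k
    using gCp f by (simp_all add: topspace_Cp)
  then obtain \<kappa> where \<kappa>: "\<forall>x \<in> topspace X. (\<lambda>i. g i (\<kappa> i) x) \<longlonglongrightarrow> f x"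
    using S1_Gamma_F_pointwise_diagonal[OF H] g by blast
  have "range (\<lambda>i. g i (\<kappa> i)) \<in> Gamma_pt (Cp X) f"
    by (rule range_in_Gamma_pt_CpI[OF f gCp g_ne]) (use \<kappa> in blast)
  then show "\<exists>b. (\<forall>n. b n \<in> A n) \<and> range b \<in> Gamma_pt (Cp X) f"
    using gA by (intro exI[of _ "\<lambda>i. g i (\<kappa> i)"]) simp
qed

theorem mainTheorem9:
  fixes X :: "'a topology"
  assumes "tychonoff_space X"
  shows "(\<forall>f \<in> topspace (Cp X). S1 (Gamma_pt (Cp X) f) (Gamma_pt (Cp X) f))
         \<longleftrightarrow> S1 (Gamma_F X) (Gamma_open X)"
proof
  assume "\<forall>f \<in> topspace (Cp X). S1 (Gamma_pt (Cp X) f) (Gamma_pt (Cp X) f)"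
  then show "S1 (Gamma_F X) (Gamma_open X)"
    using Cp_zero_in_topspace S1_Gamma_pt_Cp_zero_imp_S1_Gamma_F by blast
next
  assume "S1 (Gamma_F X) (Gamma_open X)"
  then show "\<forall>f \<in> topspace (Cp X). S1 (Gamma_pt (Cp X) f) (Gamma_pt (Cp X) f)"
    using S1_Gamma_F_imp_S1_Gamma_pt_Cp by blast
qed

end
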